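(* Let $G$ be a biconnected plane embedded graph whose external boundary is a simple cycle $C$, and let $f$ be a convex combination map of $G$. If $u$ is an external vertex, then $f(v)\neq f(u)$ for every vertex $v\neq u$.
   Context: Vertices on $C$ are external, others internal. A convex combination map of $G$ is a map $f$ from vertices to $\mathbb{R}^2$ such that the external vertices are mapped bijectively, in cyclic order along $C$, to the corners of a convex polygon $P$, and there are coefficients $\lambda_{uv}\ge0$, $\sum_v\lambda_{uv}=1$, $\lambda_{uv}>0$ iff ($u$ internal and $v$ a neighbour of $u$), with $f(u)=\sum_v\lambda_{uv}f(v)$ for every internal $u$. *)

theory Defs
  imports "HOL-Analysis.Analysis"
begin

definition simple_graph :: "'v set \<Rightarrow> ('v \<Rightarrow> 'v \<Rightarrow> bool) \<Rightarrow> bool" where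
  "simple_graph V E \<longleftrightarrow> finite V \<and> (\<forall>x y. E x y \<longrightarrow> x \<in> V \<and> y \<in> V \<and> x \<noteq> y \<and> E y x)"

definition walk_in :: "'v set \<Rightarrow> ('v \<Rightarrow> 'v \<Rightarrow> bool) \<Rightarrow> 'v list \<Rightarrow> bool" where
  "walk_in S E p \<longleftrightarrow> p \<noteq> [] \<and> set p \<subseteq> S \<and> (\<forall>i. Suc i < length p \<longrightarrow> E (p ! i) (p ! Suc i))"

definition connected_in :: "'v set \<Rightarrow> ('v \<Rightarrow> 'v \<Rightarrow> bool) \<Rightarrow> bool" where
  "connected_in S E \<longleftrightarrow> S \<noteq> {} \<and>
     (\<forall>x\<in>S. \<forall>y\<in>S. \<exists>p. walk_in S E p \<and> hd p = x \<and> last p = y)"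

definition biconnected :: "'v set \<Rightarrow> ('v \<Rightarrow> 'v \<Rightarrow> bool) \<Rightarrow> bool" where
  "biconnected V E \<longleftrightarrow> simple_graph V E \<and> card V \<ge> 3 \<and> connected_in V E \<and>
     (\<forall>x\<in>V. connected_in (V - {x}) E)"

definition simple_cycle :: "'v set \<Rightarrow> ('v \<Rightarrow> 'v \<Rightarrow> bool) \<Rightarrow> 'v list \<Rightarrow> bool" where
  "simple_cycle V E C \<longleftrightarrow> length C \<ge> 3 \<and> distinct C \<and> set C \<subseteq> V \<and>
     (\<forall>i < length C. E (C ! i) (C ! ((i + 1) mod length C)))"

definition plane_embedding ::
  "'v set \<Rightarrow> ('v \<Rightarrow> 'v \<Rightarrow> bool) \<Rightarrow> ('v \<Rightarrow> real^2) \<Rightarrow> ('v \<Rightarrow> 'v \<Rightarrow> real \<Rightarrow> real^2) \<Rightarrow> bool" where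
  "plane_embedding V E pos \<gamma> \<longleftrightarrow>
     inj_on pos V \<and>
     (\<forall>x y. E x y \<longrightarrow> arc (\<gamma> x y) \<and> pathstart (\<gamma> x y) = pos x \<and> pathfinish (\<gamma> x y) = pos y
                      \<and> path_image (\<gamma> y x) = path_image (\<gamma> x y)) \<and>
     (\<forall>x y a b. E x y \<and> E a b \<and> {x, y} \<noteq> {a, b} \<longrightarrow>
          path_image (\<gamma> x y) \<inter> path_image (\<gamma> a b) \<subseteq> pos ` ({x, y} \<inter> {a, b})) \<and>
     (\<forall>x y w. E x y \<and> w \<in> V \<and> pos w \<in> path_image (\<gamma> x y) \<longrightarrow> w = x \<or> w = y)"

definition drawing ::
  "'v set \<Rightarrow> ('v \<Rightarrow> 'v \<Rightarrow> bool) \<Rightarrow> ('v \<Rightarrow> real^2) \<Rightarrow> ('v \<Rightarrow> 'v \<Rightarrow> real \<Rightarrow> real^2) \<Rightarrow> (real^2) set" where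
  "drawing V E pos \<gamma> = pos ` V \<union> (\<Union>{path_image (\<gamma> x y) | x y. E x y})"

definition external_boundary_is ::
  "'v set \<Rightarrow> ('v \<Rightarrow> 'v \<Rightarrow> bool) \<Rightarrow> ('v \<Rightarrow> real^2) \<Rightarrow> ('v \<Rightarrow> 'v \<Rightarrow> real \<Rightarrow> real^2) \<Rightarrow> 'v list \<Rightarrow> bool" where
  "external_boundary_is V E pos \<gamma> C \<longleftrightarrow>
     frontier (outside (drawing V E pos \<gamma>)) =
       (\<Union>i<length C. path_image (\<gamma> (C ! i) (C ! ((i + 1) mod length C))))"

definition cross2 :: "real^2 \<Rightarrow> real^2 \<Rightarrow> real" where
  "cross2 a b = a$1 * b$2 - a$2 * b$1"

text \<open>The points P!0, ..., P!(k-1) are, in this cyclic order, the corners of a convex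
  polygon: every other corner lies strictly on the same side of the line through
  consecutive corners.\<close>
definition convex_polygon_corners :: "(real^2) list \<Rightarrow> bool" where
  "convex_polygon_corners P \<longleftrightarrow> length P \<ge> 3 \<and>
     (\<exists>s::real. (s = 1 \<or> s = -1) \<and>
        (\<forall>i < length P. \<forall>j < length P. j \<noteq> i \<and> j \<noteq> (i + 1) mod length P \<longrightarrow>
           s * cross2 (P ! ((i + 1) mod length P) - P ! i) (P ! j - P ! i) > 0))"

definition convex_combination_map ::
  "'v set \<Rightarrow> ('v \<Rightarrow> 'v \<Rightarrow> bool) \<Rightarrow> 'v list \<Rightarrow> ('v \<Rightarrow> real^2) \<Rightarrow> bool" where
  "convex_combination_map V E C f \<longleftrightarrow>
     convex_polygon_corners (map f C) \<and>
     (\<exists>lam :: 'v \<Rightarrow> 'v \<Rightarrow> real.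
        (\<forall>u\<in>V. \<forall>v\<in>V. lam u v \<ge> 0) \<and>
        (\<forall>u\<in>V. \<forall>v\<in>V. lam u v > 0 \<longleftrightarrow> (u \<notin> set C \<and> E u v)) \<and>
        (\<forall>u \<in> V - set C. (\<Sum>v\<in>V. lam u v) = 1) \<and>
        (\<forall>u \<in> V - set C. f u = (\<Sum>v\<in>V. lam u v *\<^sub>R f v)))"

end

theory Submission
  imports Defs
begin

text \<open>
  Since the external vertices are mapped to the corners of a convex
  polygon, the image of the external vertex u is a strict minimiser, among all
  corners, of some linear functional g = q \<bullet> f.  A convex combination map obeys a
  discrete minimum principle: if an internal vertex attains the minimum of g over
  all vertices, so do all its neighbours, because its value is a convex
  combination with positive weights of its neighbours' values.  Propagating along
  walks, the minimum of g over V is therefore attained on the cycle C, hence at u.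
  If some v \<noteq> u had f v = f u, then v also attains the minimum; a walk from v to
  another external vertex avoiding u (which exists by biconnectivity) would carry
  the minimum to an external vertex other than u, contradicting strictness.
\<close>

lemma cross2_as_inner: "cross2 a x = (vector [- a$2, a$1] :: real^2) \<bullet> x"
  by (simp add: cross2_def inner_vec_def sum_2 vector_def mult.commute)

lemma cross2_self: "cross2 a a = 0"
  by (simp add: cross2_def)

lemma cyclic_neighbours:
  fixes n k :: nat
  assumes "3 \<le> n" "k < n"
  obtains k' where "k' < n" "(k' + 1) mod n = k"
    and "k' \<noteq> k" "(k + 1) mod n \<noteq> k" "(k + 1) mod n \<noteq> k'"
proof (cases "k = 0")
  case True
  then show ?thesis using that[of "n - 1"] assms by auto
next
  case False
  have "(k + 1) mod n = (if k + 1 < n then k + 1 else 0)"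
    using assms(2) by (auto simp: mod_if)
  then show ?thesis using that[of "k - 1"] False assms by (cases "k + 1 < n") auto
qed

text \<open>Every corner of a convex polygon is the strict minimiser, among all corners,
  of some linear functional: take the sum of the inward normals of its two
  incident sides.\<close>
lemma convex_polygon_corner_strict_min:
  assumes "convex_polygon_corners P" "k < length P"
  shows "\<exists>q::real^2. \<forall>j<length P. j \<noteq> k \<longrightarrow> q \<bullet> (P!k) < q \<bullet> (P!j)"
proof -
  define n where "n = length P"
  obtain s :: real where side:
    "\<And>i j. i < n \<Longrightarrow> j < n \<Longrightarrow> j \<noteq> i \<Longrightarrow> j \<noteq> (i+1) mod n \<Longrightarrow>
        s * cross2 (P ! ((i + 1) mod n) - P ! i) (P ! j - P ! i) > 0"
    and n3: "3 \<le> n"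
    using assms(1) unfolding convex_polygon_corners_def n_def by blast
  have kn: "k < n" using assms(2) n_def by simp
  obtain k' where k'n: "k' < n" and k'k: "(k' + 1) mod n = k"
    and dist: "k' \<noteq> k" "(k + 1) mod n \<noteq> k" "(k + 1) mod n \<noteq> k'"
    using cyclic_neighbours[OF n3 kn] by blast
  define k1 where "k1 = (k + 1) mod n"
  define A where "A = P!k1 - P!k"
  define B where "B = P!k - P!k'"
  define q where "q = s *\<^sub>R ((vector [- A$2, A$1] :: real^2) + vector [- B$2, B$1])"
  have side_A: "\<And>j. j < n \<Longrightarrow> j \<noteq> k \<Longrightarrow> j \<noteq> k1 \<Longrightarrow> s * cross2 A (P!j - P!k) > 0"
    using side[OF kn] unfolding A_def k1_def by auto
  have side_B: "\<And>j. j < n \<Longrightarrow> j \<noteq> k' \<Longrightarrow> j \<noteq> k \<Longrightarrow> s * cross2 B (P!j - P!k') > 0"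
    using side[OF k'n] k'k unfolding B_def by auto
  have q_inner: "q \<bullet> x = s * (cross2 A x + cross2 B x)" for x
    unfolding q_def cross2_as_inner by (simp add: inner_add_left)
  text \<open>Measuring the second contribution from the predecessor k' makes both terms
    positive for every corner j other than k.\<close>
  have q_diff: "q \<bullet> (P!j) - q \<bullet> (P!k) = s * cross2 A (P!j - P!k) + s * cross2 B (P!j - P!k')"
    for j
    unfolding q_inner B_def by (simp add: cross2_def algebra_simps)
  have "q \<bullet> (P!k) < q \<bullet> (P!j)" if "j < n" "j \<noteq> k" for j
  proof -
    consider "j = k1" | "j = k'" | "j \<noteq> k1" "j \<noteq> k'" by blast
    then have "s * cross2 A (P!j - P!k) + s * cross2 B (P!j - P!k') > 0"
    proof cases
      case 1
      then show ?thesis using side_B[OF that(1) _ that(2)] dist(3) A_def cross2_self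
        unfolding k1_def by simp
    next
      case 2
      then show ?thesis using side_A[OF that] dist(3) B_def cross2_self
        unfolding k1_def by (simp add: cross2_def)
    next
      case 3
      then show ?thesis using side_A[OF that] side_B[OF that(1) _ that(2)] by simp
    qed
    then show ?thesis using q_diff[of j] by simp
  qed
  then show ?thesis unfolding n_def by blast
qed

lemma external_vertex_strict_min:
  assumes "convex_combination_map V E C f" "u \<in> set C"
  obtains q where "\<And>y. y \<in> set C \<Longrightarrow> y \<noteq> u \<Longrightarrow> q \<bullet> f u < q \<bullet> f y"
proof -
  obtain k where k: "k < length C" "C!k = u" using assms(2) by (meson in_set_conv_nth)
  have "convex_polygon_corners (map f C)"
    using assms(1) unfolding convex_combination_map_def by blast
  then obtain q where q: "\<forall>j<length C. j \<noteq> k \<longrightarrow> q \<bullet> f (C!k) < q \<bullet> f (C!j)"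
    using convex_polygon_corner_strict_min[of "map f C" k] k(1) by auto
  have "q \<bullet> f u < q \<bullet> f y" if y: "y \<in> set C" "y \<noteq> u" for y
  proof -
    obtain j where "j < length C" "C!j = y" using y(1) by (meson in_set_conv_nth)
    then show ?thesis using q k y(2) by auto
  qed
  then show ?thesis using that by blast
qed

lemma convex_combination_min_spreads:
  fixes g :: "'v \<Rightarrow> real" and lam :: "'v \<Rightarrow> real"
  assumes "finite V" "\<forall>y\<in>V. 0 \<le> lam y" "(\<Sum>y\<in>V. lam y) = 1"
    and "g w = (\<Sum>y\<in>V. lam y * g y)"
    and "\<forall>y\<in>V. m \<le> g y" "g w = m"
    and "x \<in> V" "0 < lam x"
  shows "g x = m"
proof -
  have "(\<Sum>y\<in>V. lam y * (g y - m)) = (\<Sum>y\<in>V. lam y * g y) - (\<Sum>y\<in>V. lam y) * m"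
    by (simp add: right_diff_distrib sum_subtractf sum_distrib_right)
  then have sum0: "(\<Sum>y\<in>V. lam y * (g y - m)) = 0" using assms(3,4,6) by simp
  have nonneg: "\<And>y. y \<in> V \<Longrightarrow> 0 \<le> lam y * (g y - m)" using assms(2,5) by simp
  have "\<forall>y\<in>V. lam y * (g y - m) = 0"
    using sum_nonneg_eq_0_iff[OF assms(1) nonneg] sum0 by simp
  then have "lam x * (g x - m) = 0" using assms(7) by blast
  then show ?thesis using assms(8) by simp
qed

lemma convex_combination_map_min_spreads:
  fixes V :: "'v set" and f :: "'v \<Rightarrow> real^2"
  assumes "convex_combination_map V E C f" "finite V"
    and lower: "\<forall>y\<in>V. m \<le> q \<bullet> f y"
  shows "\<forall>w\<in>V - set C. \<forall>x\<in>V. E w x \<longrightarrow> q \<bullet> f w = m \<longrightarrow> q \<bullet> f x = m"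
proof (intro ballI impI)
  fix w x assume w: "w \<in> V - set C" and x: "x \<in> V" and edge: "E w x" and wm: "q \<bullet> f w = m"
  obtain lam :: "'v \<Rightarrow> 'v \<Rightarrow> real" where
    nonneg: "\<forall>u\<in>V. \<forall>v\<in>V. 0 \<le> lam u v"
    and positive: "\<forall>u\<in>V. \<forall>v\<in>V. lam u v > 0 \<longleftrightarrow> (u \<notin> set C \<and> E u v)"
    and sum1: "\<forall>u \<in> V - set C. (\<Sum>v\<in>V. lam u v) = 1"
    and comb: "\<forall>u \<in> V - set C. f u = (\<Sum>v\<in>V. lam u v *\<^sub>R f v)"
    using assms(1) unfolding convex_combination_map_def by blast
  have "f w = (\<Sum>y\<in>V. lam w y *\<^sub>R f y)" using comb w by blast
  then have "q \<bullet> f w = (\<Sum>y\<in>V. lam w y * (q \<bullet> f y))" by (simp add: inner_sum_right)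
  moreover have "\<forall>y\<in>V. 0 \<le> lam w y" using nonneg w by blast
  moreover have "(\<Sum>y\<in>V. lam w y) = 1" using sum1 w by blast
  moreover have "0 < lam w x" using positive w x edge by blast
  ultimately show "q \<bullet> f x = m"
    using convex_combination_min_spreads[OF assms(2), of "lam w" "\<lambda>y. q \<bullet> f y" w m x]
      lower wm x by blast
qed

text \<open>Minimum principle along a walk: if a lower bound m of g spreads from
  vertices outside C to their neighbours, then a walk starting at a vertex with
  value m and ending in C meets C at a vertex with value m (namely, the first
  vertex of the walk that lies in C).\<close>
lemma walk_meets_cycle_at_min:
  fixes g :: "'v \<Rightarrow> real"
  assumes spread: "\<forall>w\<in>V - set C. \<forall>x\<in>V. E w x \<longrightarrow> g w = m \<longrightarrow> g x = m"
    and walk: "walk_in S E p" and "S \<subseteq> V" and start: "g (hd p) = m"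
    and "last p \<in> set C"
  shows "\<exists>y\<in>set p. y \<in> set C \<and> g y = m"
proof -
  have "p ! (length p - 1) \<in> set C" "length p - 1 < length p"
    using assms(5) walk unfolding walk_in_def by (auto simp: last_conv_nth)
  then have ex: "\<exists>i. i < length p \<and> p!i \<in> set C" by blast
  define i where "i = (LEAST i. i < length p \<and> p!i \<in> set C)"
  have i: "i < length p" "p!i \<in> set C" unfolding i_def using LeastI_ex[OF ex] by auto
  have before: "p!j \<notin> set C" if "j < i" for j
    using not_less_Least[of j "\<lambda>i. i < length p \<and> p!i \<in> set C"] that i(1) unfolding i_def by auto
  have "g (p!j) = m" if "j \<le> i" for j
    using that
  proof (induction j)
    case 0
    then show ?case using start walk unfolding walk_in_def by (simp add: hd_conv_nth)
  next
    case (Suc j)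
    then have ji: "j < i" and prev: "g (p!j) = m" by simp_all
    have "j < length p" "Suc j < length p" using Suc.prems i(1) by auto
    then have "p!j \<in> V" "p!Suc j \<in> V" and edge: "E (p!j) (p!Suc j)"
      using walk assms(3) nth_mem unfolding walk_in_def by blast+
    then show ?case using spread before[OF ji] prev by blast
  qed
  then show ?thesis using i by (auto intro!: bexI[of _ "p!i"])
qed

lemma cycle_min_is_global_min:
  assumes cc: "convex_combination_map V E C f" "finite V" "connected_in V E"
    and "set C \<subseteq> V" "u \<in> set C"
    and strict: "\<And>y. y \<in> set C \<Longrightarrow> y \<noteq> u \<Longrightarrow> q \<bullet> f u < q \<bullet> f y"
  shows "\<forall>y\<in>V. q \<bullet> f u \<le> q \<bullet> f y"
proof -
  define m where "m = Min ((\<lambda>y. q \<bullet> f y) ` V)"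
  have u: "u \<in> V" using assms(4,5) by auto
  have lower: "\<forall>y\<in>V. m \<le> q \<bullet> f y" unfolding m_def using assms(2) by simp
  obtain w where w: "w \<in> V" "q \<bullet> f w = m"
    unfolding m_def using assms(2) u Min_in[of "(\<lambda>y. q \<bullet> f y) ` V"] by fastforce
  obtain p where p: "walk_in V E p" "hd p = w" "last p = u"
    using assms(3) w(1) u unfolding connected_in_def by blast
  obtain y where "y \<in> set C" "q \<bullet> f y = m"
    using walk_meets_cycle_at_min[OF convex_combination_map_min_spreads[OF cc(1,2) lower]
        p(1) order_refl] p(2,3) w(2) assms(5) by blast
  then have "q \<bullet> f u \<le> m" using strict by (cases "y = u") (auto simp: less_imp_le)
  then show ?thesis using lower by auto
qed

theorem lemma2p2:
  fixes V :: "'v set" and E :: "'v \<Rightarrow> 'v \<Rightarrow> bool" and C :: "'v list"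
    and pos :: "'v \<Rightarrow> real^2" and \<gamma> :: "'v \<Rightarrow> 'v \<Rightarrow> real \<Rightarrow> real^2"
    and f :: "'v \<Rightarrow> real^2"
  assumes "biconnected V E"
    and "plane_embedding V E pos \<gamma>"
    and "simple_cycle V E C"
    and "external_boundary_is V E pos \<gamma> C"
    and "convex_combination_map V E C f"
    and "u \<in> set C"
    and "v \<in> V" and "v \<noteq> u"
  shows "f v \<noteq> f u"
proof
  assume same: "f v = f u"
  have fin: "finite V" and conn: "connected_in V E" and conn_u: "connected_in (V - {u}) E"
    and C3: "3 \<le> length C" and dist: "distinct C" and CV: "set C \<subseteq> V"
    using assms(1,3,6) unfolding biconnected_def simple_graph_def simple_cycle_def by auto
  obtain q where strict: "\<And>y. y \<in> set C \<Longrightarrow> y \<noteq> u \<Longrightarrow> q \<bullet> f u < q \<bullet> f y"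
    using external_vertex_strict_min[OF assms(5,6)] by blast
  have min: "\<forall>y\<in>V. q \<bullet> f u \<le> q \<bullet> f y"
    using cycle_min_is_global_min[OF assms(5) fin conn CV assms(6) strict] .
  obtain x where x: "x \<in> set C" "x \<noteq> u"
    using C3 dist card_mono[of "{u}" "set C"] distinct_card[of C] by fastforce
  then obtain p where p: "walk_in (V - {u}) E p" "hd p = v" "last p = x"
    using conn_u CV assms(7,8) unfolding connected_in_def by blast
  obtain y where "y \<in> set p" "y \<in> set C" "q \<bullet> f y = q \<bullet> f u"
    using walk_meets_cycle_at_min[OF convex_combination_map_min_spreads[OF assms(5) fin min]
        p(1) Diff_subset] p(2,3) x(1) same by auto
  moreover have "y \<noteq> u" using p(1) \<open>y \<in> set p\<close> unfolding walk_in_def by auto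
  ultimately show False using strict by fastforce
qed

end
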